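(* Fix an integer $k$ and a positive integer $N$. Let $\alpha_i,\beta_i,p_i,q_i,\eta_i,\xi_i$ ($i=1,\dots,N$) be real numbers, and let $F$ be the $N\times N$ matrix with entries $$F_{ij}=\alpha_ip_i^{k+j-1}e^{\eta_i}+\beta_iq_i^{k+j-1}e^{\xi_i},\qquad i,j=1,\dots,N.$$ Suppose $$q_N<q_{N-1}<\cdots<q_1<0<p_1<p_2<\cdots<p_N,\qquad \alpha_i>0,\qquad \operatorname{sgn}\beta_i=(-1)^{k+i-1}\quad(i=1,\dots,N).$$ Then $\det F>0$.
   Context: $\operatorname{sgn}$ denotes the sign function ($\operatorname{sgn}x=1$ for $x>0$, $-1$ for $x<0$). *)

theory Defs
  imports Complex_Main "Jordan_Normal_Form.Determinant"
begin

(* Indices are 0-based: paper's index i (1..N) corresponds to i-1 here. *)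
definition Fmat :: "int \<Rightarrow> nat \<Rightarrow> (nat \<Rightarrow> real) \<Rightarrow> (nat \<Rightarrow> real) \<Rightarrow> (nat \<Rightarrow> real)
   \<Rightarrow> (nat \<Rightarrow> real) \<Rightarrow> (nat \<Rightarrow> real) \<Rightarrow> (nat \<Rightarrow> real) \<Rightarrow> real mat" where
  "Fmat k N \<alpha> \<beta> p q \<eta> \<xi> = mat N N (\<lambda>(i, j).
      \<alpha> i * p i powi (k + int j) * exp (\<eta> i) + \<beta> i * q i powi (k + int j) * exp (\<xi> i))"

end

theory Submission
  imports Defs
begin

(* Row i of F is a_i (p_i^j)_j + b_i (q_i^j)_j with a_i = alpha_i p_i^k e^eta_i and
   b_i = beta_i q_i^k e^xi_i.  Expanding the determinant multilinearly in the rows writes det F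
   as a sum, over the sets X of rows taken from the q-part, of determinants of row-scaled
   Vandermonde matrices, each equal to prod_j c_j prod_{i<j} (x_j - x_i).  A p-row has a_j > 0
   and a node p_j above all earlier nodes; a q-row has a node q_j below all earlier nodes, so
   prod_{i<j} (q_j - x_i) has sign (-1)^j, and so has b_j because sgn beta_j = (-1)^(k+j)
   and sgn (q_j^k) = (-1)^k.  Hence every summand is positive. *)

lemma det_mat_leibniz:
  "det (mat n n (\<lambda>(i, j). f i j)) =
     (\<Sum>\<pi> | \<pi> permutes {0..<n}. signof \<pi> * (\<Prod>i = 0..<n. f i (\<pi> i)))"
  unfolding det_def'[OF mat_carrier]
  by (intro sum.cong refl arg_cong2[where f = "(*)"] prod.cong) (auto simp: permutes_def)

lemma det_mat_scale_rows:
  "det (mat n n (\<lambda>(i, j). c i * f i j)) = prod c {0..<n} * det (mat n n (\<lambda>(i, j). f i j))"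
  by (simp add: det_mat_leibniz prod.distrib sum_distrib_left ac_simps)

lemma prod_add_If:
  fixes f g :: "'a \<Rightarrow> 'b::comm_semiring_1"
  assumes "finite A"
  shows "(\<Prod>i\<in>A. f i + g i) = (\<Sum>X\<in>Pow A. \<Prod>i\<in>A. if i \<in> X then g i else f i)"
proof -
  have "(\<Prod>i\<in>A. f i + g i) = (\<Prod>i\<in>A. g i + f i)" by (simp add: add.commute)
  also have "\<dots> = (\<Sum>X\<in>Pow A. (\<Prod>i\<in>X. g i) * (\<Prod>i\<in>A - X. f i))"
    using assms by (rule prod_add)
  also have "\<dots> = (\<Sum>X\<in>Pow A. \<Prod>i\<in>A. if i \<in> X then g i else f i)"
    using assms by (intro sum.cong refl) (auto simp: prod.If_cases Int_absorb1 Diff_eq)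
  finally show ?thesis .
qed

lemma det_mat_add_rows:
  "det (mat n n (\<lambda>(i, j). f i j + g i j)) =
     (\<Sum>X\<in>Pow {0..<n}. det (mat n n (\<lambda>(i, j). if i \<in> X then g i j else f i j)))"
  unfolding det_mat_leibniz
  by (simp add: prod_add_If sum_distrib_left if_distrib[of "\<lambda>h. h _"] sum.swap[of _ "Pow _"])

lemma sgn_prod:
  fixes f :: "'a \<Rightarrow> 'b::linordered_idom"
  shows "sgn (prod f A) = (\<Prod>x\<in>A. sgn (f x))"
  by (induction A rule: infinite_finite_induct) (simp_all add: sgn_mult)

lemma det_vandermonde:
  fixes z :: "nat \<Rightarrow> 'a::comm_ring_1"
  shows "det (mat n n (\<lambda>(i, j). z i ^ j)) = (\<Prod>j<n. \<Prod>i<j. z j - z i)"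
proof (induction n arbitrary: z)
  case 0
  then show ?case by (simp add: det_dim_zero)
next
  case (Suc n)
  define A where "A = mat (Suc n) (Suc n) (\<lambda>(i, j). z i ^ j)"
  (* U subtracts z 0 times column j - 1 from column j, leaving e_0 as the first row. *)
  define U where "U = mat (Suc n) (Suc n)
    (\<lambda>(i, j). if i = j then 1 else if j = Suc i then - z 0 else (0::'a))"
  define B where "B = mat (Suc n) (Suc n)
    (\<lambda>(i, j). if j = 0 then 1 else (z i - z 0) * z i ^ (j - 1))"
  have A: "A \<in> carrier_mat (Suc n) (Suc n)" and U: "U \<in> carrier_mat (Suc n) (Suc n)"
    unfolding A_def U_def by auto
  have "upper_triangular U" unfolding U_def upper_triangular_def by auto
  then have det_U: "det U = 1"
    using det_upper_triangular[OF _ U] by (simp add: prod_list_diag_prod U_def)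
  have "A * U = B"
  proof (rule eq_matI)
    fix i j assume "i < dim_row B" and "j < dim_col B"
    then have i: "i < Suc n" and j: "j < Suc n" unfolding B_def by auto
    have "(A * U) $$ (i, j) = (\<Sum>l<Suc n. z i ^ l * U $$ (l, j))"
      using i j A U by (simp add: scalar_prod_def A_def atLeast0LessThan)
    also have "\<dots> = (\<Sum>l<Suc n. (if l = j then z i ^ l else 0)
                                 + (if Suc l = j then - z 0 * z i ^ l else 0))"
      using j by (intro sum.cong) (auto simp: U_def)
    also have "\<dots> = B $$ (i, j)"
    proof (cases j)
      case 0
      then show ?thesis using i j by (simp add: sum.distrib B_def)
    next
      case (Suc j')
      have "(\<Sum>l<Suc n. (if Suc l = j then - z 0 * z i ^ l else 0))
          = (\<Sum>l<Suc n. (if l = j' then - z 0 * z i ^ l else 0))"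
        using Suc by (intro sum.cong) auto
      then show ?thesis using i j Suc
        by (cases "Suc j' < n") (auto simp: sum.distrib B_def algebra_simps dest: Suc_lessI)
    qed
    finally show "(A * U) $$ (i, j) = B $$ (i, j)" .
  qed (auto simp: A_def B_def U_def)
  then have "det A = det B" using det_mult[OF A U] det_U by simp
  also have "\<dots> = (\<Sum>j<Suc n. B $$ (0, j) * cofactor B 0 j)"
    by (rule laplace_expansion_row) (auto simp: B_def)
  also have "\<dots> = det (mat_delete B 0 0)"
    by (subst sum.lessThan_Suc_shift) (simp add: B_def cofactor_def)
  also have "mat_delete B 0 0 = mat n n (\<lambda>(i, j). (z (Suc i) - z 0) * z (Suc i) ^ j)"
    by (rule eq_matI) (auto simp: mat_delete_def B_def)
  also have "det \<dots> = (\<Prod>i<n. z (Suc i) - z 0) * (\<Prod>j<n. \<Prod>i<j. z (Suc j) - z (Suc i))"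
    by (simp add: det_mat_scale_rows Suc.IH atLeast0LessThan)
  also have "\<dots> = (\<Prod>j<Suc n. \<Prod>i<j. z j - z i)"
    by (simp add: prod.lessThan_Suc_shift prod.distrib del: prod.lessThan_Suc)
  finally show ?case unfolding A_def .
qed

lemma det_mat_scaled_vandermonde:
  fixes c z :: "nat \<Rightarrow> 'a::comm_ring_1"
  shows "det (mat n n (\<lambda>(i, j). c i * z i ^ j)) = (\<Prod>j<n. c j * (\<Prod>i<j. z j - z i))"
  by (simp add: det_mat_scale_rows det_vandermonde prod.distrib atLeast0LessThan)

lemma det_mat_add_scaled_vandermonde:
  fixes a b x y :: "nat \<Rightarrow> 'a::comm_ring_1"
  shows "det (mat n n (\<lambda>(i, j). a i * x i ^ j + b i * y i ^ j)) =
    (\<Sum>X\<in>Pow {0..<n}. \<Prod>j<n. (if j \<in> X then b j else a j) *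
       (\<Prod>i<j. (if j \<in> X then y j else x j) - (if i \<in> X then y i else x i)))"
proof -
  have "(if i \<in> X then b i * y i ^ j else a i * x i ^ j)
      = (if i \<in> X then b i else a i) * (if i \<in> X then y i else x i) ^ j" for X i j
    by simp
  then show ?thesis by (simp add: det_mat_add_rows det_mat_scaled_vandermonde)
qed

lemma sgn_prod_diff_less:
  fixes y :: "nat \<Rightarrow> 'a::linordered_idom"
  assumes "\<And>i. i < j \<Longrightarrow> z < y i"
  shows "sgn (\<Prod>i<j. z - y i) = (-1) ^ j"
  using assms by (simp add: sgn_prod)

lemma mixed_vandermonde_factor_pos:
  fixes a b p q :: "nat \<Rightarrow> real"
  assumes p_mono: "\<And>i. i < j \<Longrightarrow> p i < p j" and q_anti: "\<And>i. i < j \<Longrightarrow> q j < q i"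
    and q_neg: "\<And>i. i \<le> j \<Longrightarrow> q i < 0" and p_pos: "\<And>i. i \<le> j \<Longrightarrow> 0 < p i"
    and "0 < a j" and sgn_b: "sgn (b j) = (-1) ^ j"
  shows "0 < (if j \<in> X then b j else a j) *
    (\<Prod>i<j. (if j \<in> X then q j else p j) - (if i \<in> X then q i else p i))"
proof (cases "j \<in> X")
  case True
  have "sgn (\<Prod>i<j. q j - (if i \<in> X then q i else p i)) = (-1) ^ j"
    by (rule sgn_prod_diff_less) (auto intro: q_anti less_trans[OF q_neg p_pos])
  then have "sgn (b j * (\<Prod>i<j. q j - (if i \<in> X then q i else p i))) = 1"
    by (simp add: sgn_mult sgn_b flip: power_mult_distrib)
  then show ?thesis using True by (simp add: sgn_1_pos)
next
  case False
  have "0 < (\<Prod>i<j. p j - (if i \<in> X then q i else p i))"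
    by (rule prod_pos) (auto intro: p_mono less_trans[OF q_neg p_pos])
  then show ?thesis using False \<open>0 < a j\<close> by simp
qed

lemma sgn_mult_power_int_neg:
  fixes \<beta> q e :: real
  assumes "sgn \<beta> = (-1) powi (k + int i)" and "q < 0"
  shows "sgn (\<beta> * q powi k * exp e) = (-1) ^ i"
proof -
  have "sgn (\<beta> * q powi k * exp e) = (-1) powi (k + int i) * (-1) powi k"
    using assms by (simp add: sgn_mult)
  also have "\<dots> = ((-1) * (-1)) powi k * (-1) ^ i"
    by (simp add: power_int_add power_int_mult_distrib)
  finally show ?thesis by simp
qed

lemma Fmat_eq_mat_powers:
  assumes "\<And>i. i < N \<Longrightarrow> p i \<noteq> 0" and "\<And>i. i < N \<Longrightarrow> q i \<noteq> 0"
  shows "Fmat k N \<alpha> \<beta> p q \<eta> \<xi> = mat N N (\<lambda>(i, j).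
    (\<alpha> i * p i powi k * exp (\<eta> i)) * p i ^ j + (\<beta> i * q i powi k * exp (\<xi> i)) * q i ^ j)"
  by (rule eq_matI) (auto simp: Fmat_def power_int_add assms)

theorem lemma4p6:
  fixes k :: int and N :: nat
    and \<alpha> \<beta> p q \<eta> \<xi> :: "nat \<Rightarrow> real"
  assumes "N > 0"
    and "\<And>i j. i < j \<Longrightarrow> j < N \<Longrightarrow> q j < q i"
    and "q 0 < 0" and "0 < p 0"
    and "\<And>i j. i < j \<Longrightarrow> j < N \<Longrightarrow> p i < p j"
    and "\<And>i. i < N \<Longrightarrow> \<alpha> i > 0"
    and "\<And>i. i < N \<Longrightarrow> sgn (\<beta> i) = (-1) powi (k + int i)"
  shows "det (Fmat k N \<alpha> \<beta> p q \<eta> \<xi>) > 0"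
proof -
  note q_anti = assms(2) and p_mono = assms(5)
  have p_pos: "0 < p i" if "i < N" for i
    using p_mono[of 0 i] that \<open>0 < p 0\<close> by (cases i) auto
  have q_neg: "q i < 0" if "i < N" for i
    using q_anti[of 0 i] that \<open>q 0 < 0\<close> by (cases i) auto
  define a where "a i = \<alpha> i * p i powi k * exp (\<eta> i)" for i
  define b where "b i = \<beta> i * q i powi k * exp (\<xi> i)" for i
  have a_pos: "0 < a i" if "i < N" for i
    using assms(6)[OF that] p_pos[OF that] by (simp add: a_def)
  have sgn_b: "sgn (b i) = (-1) ^ i" if "i < N" for i
    unfolding b_def using assms(7)[OF that] q_neg[OF that] by (rule sgn_mult_power_int_neg)
  have "det (Fmat k N \<alpha> \<beta> p q \<eta> \<xi>) = (\<Sum>X\<in>Pow {0..<N}. \<Prod>j<N.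
      (if j \<in> X then b j else a j) *
      (\<Prod>i<j. (if j \<in> X then q j else p j) - (if i \<in> X then q i else p i)))"
  proof -
    have "Fmat k N \<alpha> \<beta> p q \<eta> \<xi> = mat N N (\<lambda>(i, j). a i * p i ^ j + b i * q i ^ j)"
      unfolding a_def b_def using p_pos q_neg by (intro Fmat_eq_mat_powers) force+
    then show ?thesis by (simp add: det_mat_add_scaled_vandermonde)
  qed
  also have "\<dots> > 0"
    by (intro sum_pos prod_pos mixed_vandermonde_factor_pos)
       (auto intro: p_mono q_anti p_pos q_neg a_pos sgn_b)
  finally show ?thesis .
qed

end
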